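(* Let $(X,\tau)$ be a real Hausdorff extended locally convex space with finest locally convex topology $\tau_F$, and let $A\subseteq X$ be such that both $A$ and its complement $A^c=X\setminus A$ are convex. Then the following are equivalent: (i) $\mathrm{core}(A^c)=A^c$ and $A$ is closed in $(X,\tau)$; (ii) $A$ is closed in $(X,\tau_F)$.
   Context: An extended seminorm on a real vector space $X$ is a map $\rho:X\to[0,\infty]$ with $\rho(\alpha x)=|\alpha|\rho(x)$ and $\rho(x+y)\le\rho(x)+\rho(y)$. An extended locally convex space $(X,\tau)$ is a vector space with the topology induced by a family $\{\rho_i\}$ of extended seminorms (neighborhood base at $x_0$: $\{x:\max_{i\in J}\rho_i(x-x_0)<\varepsilon\}$, $J$ finite, $\varepsilon>0$). A locally convex topology is one induced in this way by finite-valued seminorms. The finest locally convex topology $\tau_F$ of $(X,\tau)$ is the locally convex topology on $X$ with $\tau_F\subseteq\tau$ such that every locally convex topology $\sigma\subseteq\tau$ on $X$ satisfies $\sigma\subseteq\tau_F$. For $B\subseteq X$, $a\in\mathrm{core}(B)$ means: for every $x\in X$ there is $\delta_x>0$ with $a+tx\in B$ for all $0\le t\le\delta_x$. *)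

theory Defs
  imports "HOL-Analysis.Analysis" "HOL-Library.Extended_Nonnegative_Real"
begin

text \<open>Extended seminorm: values in [0,\<infinity>] (ennreal), absolutely homogeneous
  (with 0 * \<infinity> = 0) and subadditive.\<close>
definition ext_seminorm :: "('a::real_vector \<Rightarrow> ennreal) \<Rightarrow> bool" where
  "ext_seminorm \<rho> \<longleftrightarrow>
     (\<forall>\<alpha> x. \<rho> (\<alpha> *\<^sub>R x) = ennreal \<bar>\<alpha>\<bar> * \<rho> x) \<and>
     (\<forall>x y. \<rho> (x + y) \<le> \<rho> x + \<rho> y)"

definition seminorm_topology :: "('a::real_vector \<Rightarrow> ennreal) set \<Rightarrow> 'a topology" where
  "seminorm_topology P = topology (\<lambda>U. \<forall>x0\<in>U. \<exists>J \<epsilon>. finite J \<and> J \<subseteq> P \<and> \<epsilon> > (0::real) \<and>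
       {x. \<forall>\<rho>\<in>J. \<rho> (x - x0) < ennreal \<epsilon>} \<subseteq> U)"

definition ext_locally_convex :: "'a::real_vector topology \<Rightarrow> bool" where
  "ext_locally_convex \<tau> \<longleftrightarrow>
     (\<exists>P. (\<forall>\<rho>\<in>P. ext_seminorm \<rho>) \<and> \<tau> = seminorm_topology P)"

definition locally_convex :: "'a::real_vector topology \<Rightarrow> bool" where
  "locally_convex \<tau> \<longleftrightarrow>
     (\<exists>P. (\<forall>\<rho>\<in>P. ext_seminorm \<rho> \<and> (\<forall>x. \<rho> x < \<infinity>)) \<and> \<tau> = seminorm_topology P)"

definition coarser :: "'a topology \<Rightarrow> 'a topology \<Rightarrow> bool" where
  "coarser \<sigma> \<tau> \<longleftrightarrow> (\<forall>U. openin \<sigma> U \<longrightarrow> openin \<tau> U)"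

definition finest_lc_topology :: "'a::real_vector topology \<Rightarrow> 'a topology \<Rightarrow> bool" where
  "finest_lc_topology \<tau> \<tau>F \<longleftrightarrow> locally_convex \<tau>F \<and> coarser \<tau>F \<tau> \<and>
     (\<forall>\<sigma>. locally_convex \<sigma> \<and> coarser \<sigma> \<tau> \<longrightarrow> coarser \<sigma> \<tau>F)"

definition algebraic_core :: "'a::real_vector set \<Rightarrow> 'a set" where
  "algebraic_core B = {a. \<forall>x. \<exists>\<delta>>0. \<forall>t. 0 \<le> t \<and> t \<le> \<delta> \<longrightarrow> a + t *\<^sub>R x \<in> B}"

end

theory Submission
  imports Defs
begin

(* (ii) implies (i): tau_F is coarser than tau, and for a finite-valued seminorm rho the map
   t \<mapsto> rho (t x) tends to 0, so every point of a tau_F-open set is a core point of it.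

   (i) implies (ii): for a in -A the set C_a = {x. a + x \<in> -A \<and> a - x \<in> -A} is convex, symmetric,
   absorbing (a is a core point of -A) and a tau-neighbourhood of 0. Its Minkowski functional p_a
   is a finite-valued seminorm, continuous for tau, and {x. p_a (x - a) < 1} \<subseteq> -A. The seminorms
   p_a generate a locally convex topology coarser than tau, hence coarser than tau_F, in which -A
   is open. *)

definition seminorm_ball :: "('a::real_vector \<Rightarrow> ennreal) set \<Rightarrow> 'a \<Rightarrow> real \<Rightarrow> 'a set" where
  "seminorm_ball J x0 \<epsilon> = {x. \<forall>\<rho>\<in>J. \<rho> (x - x0) < ennreal \<epsilon>}"

lemma seminorm_ball_antimono:
  assumes "J \<subseteq> J'" and "\<epsilon>' \<le> \<epsilon>"
  shows "seminorm_ball J' x0 \<epsilon>' \<subseteq> seminorm_ball J x0 \<epsilon>"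
  using assms unfolding seminorm_ball_def by (auto intro: order.strict_trans2 ennreal_leI)

lemma istopology_seminorm_balls:
  "istopology (\<lambda>U. \<forall>x0\<in>U. \<exists>J \<epsilon>. finite J \<and> J \<subseteq> P \<and> \<epsilon> > 0 \<and> seminorm_ball J x0 \<epsilon> \<subseteq> U)"
  unfolding istopology_def
proof (intro conjI allI impI ballI)
  fix S T x0
  assume S: "\<forall>x0\<in>S. \<exists>J \<epsilon>. finite J \<and> J \<subseteq> P \<and> \<epsilon> > 0 \<and> seminorm_ball J x0 \<epsilon> \<subseteq> S"
    and T: "\<forall>x0\<in>T. \<exists>J \<epsilon>. finite J \<and> J \<subseteq> P \<and> \<epsilon> > 0 \<and> seminorm_ball J x0 \<epsilon> \<subseteq> T"
    and x0: "x0 \<in> S \<inter> T"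
  obtain J1 \<epsilon>1 where "finite J1" "J1 \<subseteq> P" "\<epsilon>1 > 0" and J1: "seminorm_ball J1 x0 \<epsilon>1 \<subseteq> S"
    using bspec[OF S IntD1[OF x0]] by blast
  moreover obtain J2 \<epsilon>2 where "finite J2" "J2 \<subseteq> P" "\<epsilon>2 > 0" and J2: "seminorm_ball J2 x0 \<epsilon>2 \<subseteq> T"
    using bspec[OF T IntD2[OF x0]] by blast
  moreover have "seminorm_ball (J1 \<union> J2) x0 (min \<epsilon>1 \<epsilon>2) \<subseteq> S \<inter> T"
    using seminorm_ball_antimono[of J1 "J1 \<union> J2" "min \<epsilon>1 \<epsilon>2" \<epsilon>1 x0]
      seminorm_ball_antimono[of J2 "J1 \<union> J2" "min \<epsilon>1 \<epsilon>2" \<epsilon>2 x0] J1 J2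
    by auto
  ultimately show "\<exists>J \<epsilon>. finite J \<and> J \<subseteq> P \<and> \<epsilon> > 0 \<and> seminorm_ball J x0 \<epsilon> \<subseteq> S \<inter> T"
    by (intro exI[of _ "J1 \<union> J2"] exI[of _ "min \<epsilon>1 \<epsilon>2"]) simp
next
  fix K x0
  assume K: "\<forall>S\<in>K. \<forall>x0\<in>S. \<exists>J \<epsilon>. finite J \<and> J \<subseteq> P \<and> \<epsilon> > 0 \<and> seminorm_ball J x0 \<epsilon> \<subseteq> S"
    and "x0 \<in> \<Union>K"
  then obtain S where "S \<in> K" and "x0 \<in> S"
    by blast
  then obtain J \<epsilon> where "finite J" "J \<subseteq> P" "\<epsilon> > 0" and "seminorm_ball J x0 \<epsilon> \<subseteq> S"
    using bspec[OF bspec[OF K \<open>S \<in> K\<close>] \<open>x0 \<in> S\<close>] by blast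
  with \<open>S \<in> K\<close> show "\<exists>J \<epsilon>. finite J \<and> J \<subseteq> P \<and> \<epsilon> > 0 \<and> seminorm_ball J x0 \<epsilon> \<subseteq> \<Union>K"
    by (meson Union_upper order_trans)
qed

lemma openin_seminorm_topology:
  "openin (seminorm_topology P) U \<longleftrightarrow>
     (\<forall>x0\<in>U. \<exists>J \<epsilon>. finite J \<and> J \<subseteq> P \<and> \<epsilon> > 0 \<and> seminorm_ball J x0 \<epsilon> \<subseteq> U)"
  using istopology_seminorm_balls[of P]
  unfolding seminorm_topology_def seminorm_ball_def by simp

lemma openin_seminorm_topologyE:
  assumes "openin (seminorm_topology P) U" and "x0 \<in> U"
  obtains J \<epsilon> where "finite J" "J \<subseteq> P" "0 < \<epsilon>" "seminorm_ball J x0 \<epsilon> \<subseteq> U"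
  using bspec[OF assms(1)[unfolded openin_seminorm_topology] assms(2)] by blast

lemma topspace_seminorm_topology [simp]: "topspace (seminorm_topology P) = UNIV"
proof -
  have "openin (seminorm_topology P) UNIV"
    unfolding openin_seminorm_topology by (auto intro!: exI[of _ "{}"] exI[of _ 1])
  then show ?thesis
    by (metis openin_subset top.extremum_unique)
qed

lemma closedin_seminorm_topology:
  "closedin (seminorm_topology P) A \<longleftrightarrow> openin (seminorm_topology P) (- A)"
  by (simp add: closedin_def Compl_eq_Diff_UNIV)

definition seminorm_continuous_at_0 :: "('a::real_vector \<Rightarrow> ennreal) set \<Rightarrow> ('a \<Rightarrow> ennreal) \<Rightarrow> bool" where
  "seminorm_continuous_at_0 P q \<longleftrightarrow>
     (\<forall>\<epsilon>>0. \<exists>J \<delta>. finite J \<and> J \<subseteq> P \<and> \<delta> > 0 \<and> (\<forall>x\<in>seminorm_ball J 0 \<delta>. q x < ennreal \<epsilon>))"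

lemma coarser_seminorm_topologyI:
  assumes "\<And>q. q \<in> Q \<Longrightarrow> seminorm_continuous_at_0 P q"
  shows "coarser (seminorm_topology Q) (seminorm_topology P)"
  unfolding coarser_def
proof (intro allI impI)
  fix U assume U: "openin (seminorm_topology Q) U"
  show "openin (seminorm_topology P) U"
    unfolding openin_seminorm_topology
  proof
    fix x0 assume "x0 \<in> U"
    with U obtain J \<epsilon> where J: "finite J" "J \<subseteq> Q" "\<epsilon> > 0" "seminorm_ball J x0 \<epsilon> \<subseteq> U"
      by (rule openin_seminorm_topologyE)
    have "\<forall>q\<in>J. \<exists>K \<delta>. finite K \<and> K \<subseteq> P \<and> \<delta> > 0 \<and> (\<forall>x\<in>seminorm_ball K 0 \<delta>. q x < ennreal \<epsilon>)"
      using assms J(2,3) unfolding seminorm_continuous_at_0_def by (simp add: subset_iff)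
    then obtain K \<delta> where K: "\<And>q. q \<in> J \<Longrightarrow> finite (K q) \<and> K q \<subseteq> P \<and> \<delta> q > 0 \<and>
        (\<forall>x\<in>seminorm_ball (K q) 0 (\<delta> q). q x < ennreal \<epsilon>)"
      by metis
    define \<delta>' where "\<delta>' = Min (insert 1 (\<delta> ` J))"
    have "seminorm_ball (\<Union>q\<in>J. K q) x0 \<delta>' \<subseteq> seminorm_ball J x0 \<epsilon>"
    proof
      fix x assume x: "x \<in> seminorm_ball (\<Union>q\<in>J. K q) x0 \<delta>'"
      have "x - x0 \<in> seminorm_ball (K q) 0 (\<delta> q)" if "q \<in> J" for q
        using seminorm_ball_antimono[of "K q" "\<Union>q\<in>J. K q" \<delta>' "\<delta> q" x0] x that J(1)
        by (auto simp: \<delta>'_def seminorm_ball_def)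
      then show "x \<in> seminorm_ball J x0 \<epsilon>"
        using K unfolding seminorm_ball_def by auto
    qed
    moreover have "\<delta>' > 0"
      using K J(1) by (simp add: \<delta>'_def)
    moreover have "finite (\<Union>q\<in>J. K q)" and "(\<Union>q\<in>J. K q) \<subseteq> P"
      using J(1) K by auto
    ultimately show "\<exists>J \<epsilon>. finite J \<and> J \<subseteq> P \<and> \<epsilon> > 0 \<and> seminorm_ball J x0 \<epsilon> \<subseteq> U"
      using J(4) by (intro exI[of _ "\<Union>q\<in>J. K q"] exI[of _ \<delta>']) simp
  qed
qed

lemma ext_seminorm_scaleR: "ext_seminorm \<rho> \<Longrightarrow> \<rho> (c *\<^sub>R x) = ennreal \<bar>c\<bar> * \<rho> x"
  unfolding ext_seminorm_def by blast

lemma ext_seminorm_minus: "ext_seminorm \<rho> \<Longrightarrow> \<rho> (- x) = \<rho> x"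
  using ext_seminorm_scaleR[of \<rho> "-1" x] by simp

lemma ext_seminorm_scaleR_less:
  assumes "ext_seminorm \<rho>" and "0 < c" and "\<rho> x < ennreal (c * \<epsilon>)"
  shows "\<rho> ((1 / c) *\<^sub>R x) < ennreal \<epsilon>"
proof -
  have "\<rho> ((1 / c) *\<^sub>R x) = ennreal (1 / c) * \<rho> x"
    using assms(1,2) by (simp add: ext_seminorm_scaleR)
  also have "\<dots> < ennreal (1 / c) * ennreal (c * \<epsilon>)"
    using assms(2,3) by (intro ennreal_mult_strict_left_mono) auto
  also have "\<dots> = ennreal \<epsilon>"
    using assms(2) by (simp add: ennreal_mult'[symmetric])
  finally show ?thesis .
qed

definition minkowski_functional :: "'a::real_vector set \<Rightarrow> 'a \<Rightarrow> real" where
  "minkowski_functional C x = Inf {t. 0 < t \<and> (1 / t) *\<^sub>R x \<in> C}"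

locale absorbing_disk =
  fixes C :: "'a::real_vector set"
  assumes convex: "convex C"
    and symmetric: "x \<in> C \<Longrightarrow> - x \<in> C"
    and absorbing: "\<exists>\<delta>>0. \<delta> *\<^sub>R x \<in> C"
begin

lemma zero_mem: "0 \<in> C"
  using absorbing[of 0] by auto

lemma scaleR_mem: "y \<in> C \<Longrightarrow> 0 \<le> u \<Longrightarrow> u \<le> 1 \<Longrightarrow> u *\<^sub>R y \<in> C"
  using convexD[OF convex _ zero_mem, of y u "1 - u"] by simp

lemma minkowski_le: "0 < t \<Longrightarrow> (1 / t) *\<^sub>R x \<in> C \<Longrightarrow> minkowski_functional C x \<le> t"
  unfolding minkowski_functional_def by (rule cInf_lower) (auto intro: bdd_belowI[of _ 0])

lemma minkowski_greatest:
  assumes "\<And>t. 0 < t \<Longrightarrow> (1 / t) *\<^sub>R x \<in> C \<Longrightarrow> r \<le> t"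
  shows "r \<le> minkowski_functional C x"
proof -
  obtain \<delta> where "\<delta> > 0" "\<delta> *\<^sub>R x \<in> C"
    using absorbing by blast
  then have "1 / \<delta> \<in> {t. 0 < t \<and> (1 / t) *\<^sub>R x \<in> C}"
    by simp
  then show ?thesis
    unfolding minkowski_functional_def by (rule cInf_greatest[OF ex_in_conv[THEN iffD1, OF exI]]) (use assms in auto)
qed

lemma minkowski_nonneg: "0 \<le> minkowski_functional C x"
  by (rule minkowski_greatest) simp

lemma mem_if_minkowski_less_1:
  assumes "minkowski_functional C x < 1"
  shows "x \<in> C"
proof (rule ccontr)
  assume "x \<notin> C"
  have "1 \<le> t" if "0 < t" and "(1 / t) *\<^sub>R x \<in> C" for t
  proof (rule ccontr)
    assume "\<not> 1 \<le> t"
    have "t *\<^sub>R ((1 / t) *\<^sub>R x) \<in> C"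
      by (rule scaleR_mem) (use that \<open>\<not> 1 \<le> t\<close> in auto)
    with \<open>0 < t\<close> \<open>x \<notin> C\<close> show False
      by simp
  qed
  then have "1 \<le> minkowski_functional C x"
    by (rule minkowski_greatest)
  with assms show False
    by simp
qed

lemma minkowski_scaleR_pos_le:
  assumes "0 < \<alpha>"
  shows "minkowski_functional C (\<alpha> *\<^sub>R x) \<le> \<alpha> * minkowski_functional C x"
proof -
  have "minkowski_functional C (\<alpha> *\<^sub>R x) / \<alpha> \<le> minkowski_functional C x"
  proof (rule minkowski_greatest)
    fix t assume "0 < t" and "(1 / t) *\<^sub>R x \<in> C"
    with assms have "minkowski_functional C (\<alpha> *\<^sub>R x) \<le> \<alpha> * t"
      by (intro minkowski_le) auto
    with assms show "minkowski_functional C (\<alpha> *\<^sub>R x) / \<alpha> \<le> t"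
      by (simp add: field_simps)
  qed
  with assms show ?thesis
    by (simp add: field_simps)
qed

lemma minkowski_scaleR_pos:
  assumes "0 < \<alpha>"
  shows "minkowski_functional C (\<alpha> *\<^sub>R x) = \<alpha> * minkowski_functional C x"
proof (rule antisym)
  have "minkowski_functional C ((1 / \<alpha>) *\<^sub>R (\<alpha> *\<^sub>R x)) \<le> (1 / \<alpha>) * minkowski_functional C (\<alpha> *\<^sub>R x)"
    using assms by (intro minkowski_scaleR_pos_le) simp
  with assms show "\<alpha> * minkowski_functional C x \<le> minkowski_functional C (\<alpha> *\<^sub>R x)"
    by (simp add: field_simps)
qed (use assms minkowski_scaleR_pos_le in blast)

lemma minkowski_zero: "minkowski_functional C 0 = 0"
  using minkowski_scaleR_pos[of 2 0] by simp

lemma minkowski_minus: "minkowski_functional C (- x) = minkowski_functional C x"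
proof -
  have "(1 / t) *\<^sub>R (- x) \<in> C \<longleftrightarrow> (1 / t) *\<^sub>R x \<in> C" for t
    using symmetric[of "(1 / t) *\<^sub>R x"] symmetric[of "(1 / t) *\<^sub>R (- x)"] by auto
  then show ?thesis
    unfolding minkowski_functional_def by simp
qed

lemma minkowski_scaleR: "minkowski_functional C (\<alpha> *\<^sub>R x) = \<bar>\<alpha>\<bar> * minkowski_functional C x"
proof (cases "\<alpha> < 0")
  case True
  then have "minkowski_functional C (\<alpha> *\<^sub>R x) = minkowski_functional C (\<bar>\<alpha>\<bar> *\<^sub>R (- x))"
    by simp
  also have "\<dots> = \<bar>\<alpha>\<bar> * minkowski_functional C (- x)"
    using True by (intro minkowski_scaleR_pos) simp
  also have "\<dots> = \<bar>\<alpha>\<bar> * minkowski_functional C x"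
    by (simp only: minkowski_minus)
  finally show ?thesis .
next
  case False
  then show ?thesis
    by (cases "\<alpha> = 0") (simp_all add: minkowski_zero minkowski_scaleR_pos)
qed

lemma minkowski_triangle:
  "minkowski_functional C (x + y) \<le> minkowski_functional C x + minkowski_functional C y"
proof -
  have bound: "minkowski_functional C (x + y) \<le> s + t"
    if s: "0 < s" "(1 / s) *\<^sub>R x \<in> C" and t: "0 < t" "(1 / t) *\<^sub>R y \<in> C" for s t
  proof (rule minkowski_le)
    have "(s / (s + t)) *\<^sub>R ((1 / s) *\<^sub>R x) + (t / (s + t)) *\<^sub>R ((1 / t) *\<^sub>R y) \<in> C"
      using s t by (intro convexD[OF convex]) (auto simp: add_divide_distrib[symmetric])
    with s t show "(1 / (s + t)) *\<^sub>R (x + y) \<in> C"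
      by (simp add: scaleR_add_right)
  qed (use s t in simp)
  have "minkowski_functional C (x + y) - minkowski_functional C y \<le> minkowski_functional C x"
  proof (rule minkowski_greatest)
    fix s assume "0 < s" and "(1 / s) *\<^sub>R x \<in> C"
    then have "minkowski_functional C (x + y) - s \<le> minkowski_functional C y"
      by (intro minkowski_greatest) (metis bound add.commute diff_le_eq)
    then show "minkowski_functional C (x + y) - minkowski_functional C y \<le> s"
      by simp
  qed
  then show ?thesis
    by simp
qed

lemma ext_seminorm_minkowski: "ext_seminorm (\<lambda>x. ennreal (minkowski_functional C x))"
  unfolding ext_seminorm_def
  by (simp add: minkowski_scaleR ennreal_mult minkowski_nonneg minkowski_triangle ennreal_leI
      ennreal_plus[symmetric] del: ennreal_plus)

lemma seminorm_continuous_at_0_minkowski: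
  assumes "\<forall>\<rho>\<in>J. ext_seminorm \<rho>" and "finite J" and "J \<subseteq> P"
    and "0 < \<delta>" and "seminorm_ball J 0 \<delta> \<subseteq> C"
  shows "seminorm_continuous_at_0 P (\<lambda>x. ennreal (minkowski_functional C x))"
  unfolding seminorm_continuous_at_0_def
proof (intro allI impI)
  fix \<epsilon> :: real assume "0 < \<epsilon>"
  have "minkowski_functional C x < \<epsilon>" if x: "x \<in> seminorm_ball J 0 (\<epsilon> / 2 * \<delta>)" for x
  proof -
    have "(1 / (\<epsilon> / 2)) *\<^sub>R x \<in> seminorm_ball J 0 \<delta>"
      unfolding seminorm_ball_def diff_zero
    proof (intro CollectI ballI)
      fix \<rho> assume "\<rho> \<in> J"
      show "\<rho> ((1 / (\<epsilon> / 2)) *\<^sub>R x) < ennreal \<delta>"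
        by (rule ext_seminorm_scaleR_less) (use x assms(1) \<open>\<rho> \<in> J\<close> \<open>0 < \<epsilon>\<close> in \<open>auto simp: seminorm_ball_def\<close>)
    qed
    then have "minkowski_functional C x \<le> \<epsilon> / 2"
      using assms(5) \<open>0 < \<epsilon>\<close> by (intro minkowski_le) auto
    with \<open>0 < \<epsilon>\<close> show ?thesis
      by simp
  qed
  then have "\<forall>x\<in>seminorm_ball J 0 (\<epsilon> / 2 * \<delta>). ennreal (minkowski_functional C x) < ennreal \<epsilon>"
    by (simp add: ennreal_less_iff minkowski_nonneg)
  with assms(2-4) \<open>0 < \<epsilon>\<close>
  show "\<exists>J \<delta>. finite J \<and> J \<subseteq> P \<and> \<delta> > 0 \<and>
      (\<forall>x\<in>seminorm_ball J 0 \<delta>. ennreal (minkowski_functional C x) < ennreal \<epsilon>)"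
    by (intro exI[of _ J] exI[of _ "\<epsilon> / 2 * \<delta>"]) auto
qed

end

definition symmetric_shift :: "'a::real_vector set \<Rightarrow> 'a \<Rightarrow> 'a set" where
  "symmetric_shift B a = {x. a + x \<in> B \<and> a - x \<in> B}"

lemma absorbing_disk_symmetric_shift:
  assumes "convex B" and "a \<in> algebraic_core B"
  shows "absorbing_disk (symmetric_shift B a)"
proof
  show "convex (symmetric_shift B a)"
  proof (rule convexI)
    fix x y and u v :: real
    assume "x \<in> symmetric_shift B a" "y \<in> symmetric_shift B a" "0 \<le> u" "0 \<le> v" "u + v = 1"
    moreover have "u *\<^sub>R (a + x) + v *\<^sub>R (a + y) = a + (u *\<^sub>R x + v *\<^sub>R y)"
      and "u *\<^sub>R (a - x) + v *\<^sub>R (a - y) = a - (u *\<^sub>R x + v *\<^sub>R y)"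
      using \<open>u + v = 1\<close> by (simp_all add: algebra_simps flip: scaleR_add_left)
    ultimately show "u *\<^sub>R x + v *\<^sub>R y \<in> symmetric_shift B a"
      using convexD[OF assms(1)] unfolding symmetric_shift_def by (metis mem_Collect_eq)
  qed
next
  show "- x \<in> symmetric_shift B a" if "x \<in> symmetric_shift B a" for x
    using that by (simp add: symmetric_shift_def)
next
  fix x
  obtain \<delta>1 where "\<delta>1 > 0" and \<delta>1: "\<And>t. 0 \<le> t \<Longrightarrow> t \<le> \<delta>1 \<Longrightarrow> a + t *\<^sub>R x \<in> B"
    using assms(2) unfolding algebraic_core_def by blast
  obtain \<delta>2 where "\<delta>2 > 0" and \<delta>2: "\<And>t. 0 \<le> t \<Longrightarrow> t \<le> \<delta>2 \<Longrightarrow> a + t *\<^sub>R (- x) \<in> B"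
    using assms(2) unfolding algebraic_core_def by blast
  have "min \<delta>1 \<delta>2 *\<^sub>R x \<in> symmetric_shift B a"
    using \<delta>1[of "min \<delta>1 \<delta>2"] \<delta>2[of "min \<delta>1 \<delta>2"] \<open>\<delta>1 > 0\<close> \<open>\<delta>2 > 0\<close>
    by (simp add: symmetric_shift_def)
  then show "\<exists>\<delta>>0. \<delta> *\<^sub>R x \<in> symmetric_shift B a"
    using \<open>\<delta>1 > 0\<close> \<open>\<delta>2 > 0\<close> by (intro exI[of _ "min \<delta>1 \<delta>2"]) simp
qed

lemma seminorm_ball_subset_symmetric_shift:
  assumes "\<forall>\<rho>\<in>P. ext_seminorm \<rho>" and "openin (seminorm_topology P) B" and "a \<in> B"
  obtains J \<delta> where "finite J" "J \<subseteq> P" "0 < \<delta>" "seminorm_ball J 0 \<delta> \<subseteq> symmetric_shift B a"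
proof -
  obtain J \<delta> where J: "finite J" "J \<subseteq> P" "0 < \<delta>" "seminorm_ball J a \<delta> \<subseteq> B"
    using assms(2,3) by (rule openin_seminorm_topologyE)
  have "seminorm_ball J 0 \<delta> \<subseteq> symmetric_shift B a"
  proof
    fix x assume x: "x \<in> seminorm_ball J 0 \<delta>"
    then have "a + x \<in> seminorm_ball J a \<delta>" and "a - x \<in> seminorm_ball J a \<delta>"
      using J(2) assms(1) by (auto simp: seminorm_ball_def ext_seminorm_minus)
    with J(4) show "x \<in> symmetric_shift B a"
      by (auto simp: symmetric_shift_def)
  qed
  with J that show ?thesis
    by blast
qed

lemma eventually_ext_seminorm_scaleR_less:
  assumes "ext_seminorm \<rho>" and "\<rho> x < \<infinity>" and "0 < \<epsilon>"
  shows "\<forall>\<^sub>F t in nhds 0. \<rho> (t *\<^sub>R x) < ennreal \<epsilon>"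
proof -
  have "((\<lambda>t. \<rho> x * ennreal \<bar>t\<bar>) \<longlongrightarrow> \<rho> x * ennreal \<bar>0\<bar>) (nhds 0)"
    using assms(2) by (intro ennreal_tendsto_cmult tendsto_intros filterlim_ident) auto
  then have "\<forall>\<^sub>F t in nhds 0. \<rho> x * ennreal \<bar>t\<bar> < ennreal \<epsilon>"
    using assms(3) by (intro order_tendstoD(2)) auto
  then show ?thesis
    using assms(1) by (simp add: ext_seminorm_scaleR mult.commute)
qed

lemma subset_algebraic_core_if_openin:
  assumes "\<forall>\<rho>\<in>P. ext_seminorm \<rho> \<and> (\<forall>x. \<rho> x < \<infinity>)" and "openin (seminorm_topology P) B"
  shows "B \<subseteq> algebraic_core B"
proof
  fix a assume "a \<in> B"
  with assms(2) obtain J \<epsilon> where J: "finite J" "J \<subseteq> P" "0 < \<epsilon>" "seminorm_ball J a \<epsilon> \<subseteq> B"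
    by (rule openin_seminorm_topologyE)
  have "\<exists>\<delta>>0. \<forall>t. 0 \<le> t \<and> t \<le> \<delta> \<longrightarrow> a + t *\<^sub>R x \<in> B" for x
  proof -
    have "\<forall>\<^sub>F t in nhds 0. \<forall>\<rho>\<in>J. \<rho> (t *\<^sub>R x) < ennreal \<epsilon>"
      using J(1-3) assms(1) by (intro eventually_ball_finite ballI eventually_ext_seminorm_scaleR_less) auto
    then obtain d where "0 < d" and d: "\<And>t. dist t 0 < d \<Longrightarrow> \<forall>\<rho>\<in>J. \<rho> (t *\<^sub>R x) < ennreal \<epsilon>"
      unfolding eventually_nhds_metric by blast
    have "a + t *\<^sub>R x \<in> B" if "0 \<le> t" "t \<le> d / 2" for t
      using d[of t] that \<open>0 < d\<close> J(4) by (auto simp: seminorm_ball_def)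
    with \<open>0 < d\<close> show ?thesis
      by (intro exI[of _ "d / 2"]) auto
  qed
  then show "a \<in> algebraic_core B"
    by (simp add: algebraic_core_def)
qed

lemma algebraic_core_subset: "algebraic_core B \<subseteq> B"
  unfolding algebraic_core_def by (force intro: less_imp_le)

lemma openin_finest_lc_topology_if_subset_algebraic_core:
  assumes P: "\<forall>\<rho>\<in>P. ext_seminorm \<rho>" and finest: "finest_lc_topology (seminorm_topology P) \<tau>F"
    and "convex B" and core: "B \<subseteq> algebraic_core B" and open_B: "openin (seminorm_topology P) B"
  shows "openin \<tau>F B"
proof -
  define q where "q a = (\<lambda>x. ennreal (minkowski_functional (symmetric_shift B a) x))" for a
  have disk: "absorbing_disk (symmetric_shift B a)" if "a \<in> B" for a
    using absorbing_disk_symmetric_shift[OF \<open>convex B\<close>] core that by blast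
  have "locally_convex (seminorm_topology (q ` B))"
    unfolding locally_convex_def
    by (intro exI[of _ "q ` B"]) (auto simp: q_def absorbing_disk.ext_seminorm_minkowski[OF disk])
  moreover have "coarser (seminorm_topology (q ` B)) (seminorm_topology P)"
  proof (rule coarser_seminorm_topologyI, safe)
    fix a assume "a \<in> B"
    then obtain J \<delta> where "finite J" "J \<subseteq> P" "0 < \<delta>" "seminorm_ball J 0 \<delta> \<subseteq> symmetric_shift B a"
      by (rule seminorm_ball_subset_symmetric_shift[OF P open_B])
    with P show "seminorm_continuous_at_0 P (q a)"
      unfolding q_def by (intro absorbing_disk.seminorm_continuous_at_0_minkowski[OF disk[OF \<open>a \<in> B\<close>]]) auto
  qed
  ultimately have "coarser (seminorm_topology (q ` B)) \<tau>F"
    using finest unfolding finest_lc_topology_def by blast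
  moreover have "openin (seminorm_topology (q ` B)) B"
    unfolding openin_seminorm_topology
  proof
    fix a assume "a \<in> B"
    have "x \<in> B" if "x \<in> seminorm_ball {q a} a 1" for x
      using absorbing_disk.mem_if_minkowski_less_1[OF disk[OF \<open>a \<in> B\<close>], of "x - a"] that
      by (simp add: seminorm_ball_def q_def symmetric_shift_def ennreal_less_iff
          absorbing_disk.minkowski_nonneg[OF disk[OF \<open>a \<in> B\<close>]])
    with \<open>a \<in> B\<close> show "\<exists>J \<epsilon>. finite J \<and> J \<subseteq> q ` B \<and> 0 < \<epsilon> \<and> seminorm_ball J a \<epsilon> \<subseteq> B"
      by (intro exI[of _ "{q a}"] exI[of _ 1]) auto
  qed
  ultimately show ?thesis
    unfolding coarser_def by blast
qed

theorem theorem3p14: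
  fixes \<tau> \<tau>F :: "'a::real_vector topology" and A :: "'a set"
  assumes "ext_locally_convex \<tau>" and "Hausdorff_space \<tau>"
    and "finest_lc_topology \<tau> \<tau>F"
    and "convex A" and "convex (- A)"
  shows "(algebraic_core (- A) = - A \<and> closedin \<tau> A) \<longleftrightarrow> closedin \<tau>F A"
proof -
  obtain P where P: "\<forall>\<rho>\<in>P. ext_seminorm \<rho>" and \<tau>: "\<tau> = seminorm_topology P"
    using assms(1) unfolding ext_locally_convex_def by blast
  obtain PF where PF: "\<forall>\<rho>\<in>PF. ext_seminorm \<rho> \<and> (\<forall>x. \<rho> x < \<infinity>)" and \<tau>F: "\<tau>F = seminorm_topology PF"
    using assms(3) unfolding finest_lc_topology_def locally_convex_def by blast
  have "openin \<tau> (- A)" if "openin \<tau>F (- A)"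
    using assms(3) that unfolding finest_lc_topology_def coarser_def by blast
  moreover have "openin \<tau>F (- A)" if "- A \<subseteq> algebraic_core (- A)" and "openin \<tau> (- A)"
    using openin_finest_lc_topology_if_subset_algebraic_core[OF P _ assms(5)] assms(3) that \<tau> by blast
  moreover have "- A \<subseteq> algebraic_core (- A)" if "openin \<tau>F (- A)"
    using subset_algebraic_core_if_openin[OF PF] that \<tau>F by blast
  ultimately show ?thesis
    using algebraic_core_subset[of "- A"] unfolding \<tau> \<tau>F closedin_seminorm_topology by blast
qed

end
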